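(* Define for real $y$ $$rt(y)=1-\int_0^{\pi/2}e^{-y^2\tan s}\,y^2\sec^2 s\,ds,\qquad H_1(y)=1+\int_0^{\pi/2}\left(\frac{y\sec^2 s\, e^{-y\tan s}}{\left(1+e^{-y\tan s}\right)^2}-\frac12 e^{-y^2\tan s}y^2\sec^2 s\right)ds$$ (improper Riemann integrals at $s=\pi/2$). For a positive integer $n$ define $$\sigma_0(n)=\sum_{i=1}^{\infty}rt\!\left(\sin\!\left(\pi\frac{n}{i}\right)\right),\qquad fes(n)=rt\bigl(\sigma_0(n)-2\bigr).$$ Then for every positive integer $n$, $\sigma_0(n)$ equals the number of positive divisors of $n$, and $fes(n)=1$ if $n$ is prime and $fes(n)=0$ otherwise. Moreover, for every real $x$, $$\sum_{i=1}^{\infty}fes(i)\,H_1(x-i)=\pi(x),$$ where $\pi(x)$ denotes the number of primes $p\le x$. *)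

theory Defs
  imports "HOL-Analysis.Analysis" "HOL-Computational_Algebra.Primes"
begin

definition improper_integral_right :: "real \<Rightarrow> real \<Rightarrow> (real \<Rightarrow> real) \<Rightarrow> real" where
  "improper_integral_right a b f = Lim (at_left b) (\<lambda>c. integral {a..c} f)"

definition rt :: "real \<Rightarrow> real" where
  "rt y = 1 - improper_integral_right 0 (pi/2)
      (\<lambda>s. exp (- (y^2 * tan s)) * y^2 * (1 / (cos s)^2))"

definition H1 :: "real \<Rightarrow> real" where
  "H1 y = 1 + improper_integral_right 0 (pi/2)
      (\<lambda>s. y * (1 / (cos s)^2) * exp (- (y * tan s)) / (1 + exp (- (y * tan s)))^2
           - (1/2) * exp (- (y^2 * tan s)) * y^2 * (1 / (cos s)^2))"

text \<open>sigma0 n = sum over i \<ge> 1 of rt(sin(pi n / i)); the series is indexed from 0 via i = Suc k.\<close>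
definition sigma0 :: "nat \<Rightarrow> real" where
  "sigma0 n = (\<Sum>k. rt (sin (pi * real n / real (Suc k))))"

definition fes :: "nat \<Rightarrow> real" where
  "fes n = rt (sigma0 n - 2)"

end

theory Submission
  imports Defs
begin

text \<open>Both integrands are exact derivatives, \<open>-exp (-y\<^sup>2 tan s)\<close> and
  \<open>1 / (1 + exp (-y tan s)) + exp (-y\<^sup>2 tan s) / 2\<close>, so the improper integrals can be evaluated
  by letting \<open>tan s\<close> tend to infinity: \<open>rt\<close> is the indicator of \<open>y = 0\<close> and \<open>H1\<close> is the Heaviside
  step function. Since \<open>sin (\<pi> n / i) = 0\<close> exactly when \<open>i\<close> divides \<open>n\<close>, the series \<open>sigma0 n\<close>
  has finitely many nonzero terms, one per divisor; \<open>fes\<close> then detects the numbers with exactly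
  two divisors, the primes, and the last series counts the primes \<open>p \<le> x\<close>.\<close>

lemma improper_integral_right_eq:
  fixes f F :: "real \<Rightarrow> real"
  assumes "a < b"
    and deriv: "\<And>x. a \<le> x \<Longrightarrow> x < b \<Longrightarrow> (F has_real_derivative f x) (at x)"
    and lim: "(F \<longlongrightarrow> L) (at_left b)"
  shows "improper_integral_right a b f = L - F a"
proof -
  have "eventually (\<lambda>c. c \<in> {a<..<b}) (at_left b)"
    using \<open>a < b\<close> by (rule eventually_at_left_real)
  then have eq: "eventually (\<lambda>c. F c - F a = integral {a..c} f) (at_left b)"
  proof (rule eventually_mono)
    fix c assume c: "c \<in> {a<..<b}"
    have "(f has_integral (F c - F a)) {a..c}"
    proof (rule fundamental_theorem_of_calculus)
      fix x assume "x \<in> {a..c}"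
      with deriv c have "(F has_real_derivative f x) (at x)" by simp
      then show "(F has_vector_derivative f x) (at x within {a..c})"
        using has_real_derivative_iff_has_vector_derivative has_vector_derivative_at_within by blast
    qed (use c in simp)
    then show "F c - F a = integral {a..c} f" by (simp add: integral_unique)
  qed
  have "((\<lambda>c. F c - F a) \<longlongrightarrow> L - F a) (at_left b)"
    by (intro tendsto_intros lim)
  then have "((\<lambda>c. integral {a..c} f) \<longlongrightarrow> L - F a) (at_left b)"
    using eq by (rule tendsto_cong[THEN iffD1, rotated])
  then show ?thesis
    unfolding improper_integral_right_def by (intro tendsto_Lim) simp_all
qed

lemma filterlim_mult_tan_at_left:
  fixes c :: real
  assumes "0 < c"
  shows "filterlim (\<lambda>s. c * tan s) at_top (at_left (pi/2))"
  by (rule filterlim_tendsto_pos_mult_at_top[OF tendsto_const assms filterlim_tan_at_left])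

lemma tendsto_exp_uminus_at_top:
  fixes g :: "'a \<Rightarrow> real"
  assumes "filterlim g at_top F"
  shows "((\<lambda>s. exp (- g s)) \<longlongrightarrow> 0) F"
  using filterlim_compose[OF exp_at_bot filterlim_uminus_at_top[THEN iffD1, OF assms]] by simp

lemma cos_neq_0_on_quarter:
  assumes "0 \<le> s" "s < pi/2"
  shows "cos s \<noteq> 0"
  using cos_gt_zero_pi[of s] assms pi_gt_zero by linarith

lemma rt_eq: "rt y = (if y = 0 then 1 else 0)"
proof -
  let ?F = "\<lambda>s. - exp (- (y^2 * tan s))"
  have deriv: "(?F has_real_derivative exp (- (y^2 * tan s)) * y^2 * (1 / (cos s)^2)) (at s)"
    if "0 \<le> s" "s < pi/2" for s
    using cos_neq_0_on_quarter[OF that]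
    by (auto intro!: derivative_eq_intros simp: field_simps power2_eq_square)
  have lim: "(?F \<longlongrightarrow> (if y = 0 then -1 else 0)) (at_left (pi/2))"
  proof (cases "y = 0")
    case False
    then have "filterlim (\<lambda>s. y^2 * tan s) at_top (at_left (pi/2))"
      by (intro filterlim_mult_tan_at_left) simp
    from tendsto_minus[OF tendsto_exp_uminus_at_top[OF this]] False show ?thesis by simp
  qed simp
  show ?thesis
    using improper_integral_right_eq[OF _ deriv lim] unfolding rt_def by simp
qed

lemma H1_eq: "H1 y = (if 0 \<le> y then 1 else 0)"
proof -
  let ?G = "\<lambda>s. inverse (1 + exp (- (y * tan s))) + exp (- (y^2 * tan s)) / 2"
  have deriv: "(?G has_real_derivative
      y * (1 / (cos s)^2) * exp (- (y * tan s)) / (1 + exp (- (y * tan s)))^2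
      - (1/2) * exp (- (y^2 * tan s)) * y^2 * (1 / (cos s)^2)) (at s)"
    if "0 \<le> s" "s < pi/2" for s
  proof -
    have pos: "1 + exp (- (y * tan s)) \<noteq> 0"
      by (metis add_pos_pos exp_gt_zero less_irrefl zero_less_one)
    have cos: "cos s \<noteq> 0"
      using cos_neq_0_on_quarter[OF that] .
    have "((\<lambda>s. 1 + exp (- (y * tan s))) has_real_derivative
        exp (- (y * tan s)) * (- (y * inverse ((cos s)^2)))) (at s)"
      using cos by (auto intro!: derivative_eq_intros)
    from DERIV_inverse_fun[OF this pos]
    have "((\<lambda>s. inverse (1 + exp (- (y * tan s)))) has_real_derivative
        y * (1 / (cos s)^2) * exp (- (y * tan s)) / (1 + exp (- (y * tan s)))^2) (at s)"
      by (rule DERIV_cong) (use pos cos in \<open>simp add: field_simps power2_eq_square\<close>)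
    moreover have "((\<lambda>s. exp (- (y^2 * tan s)) / 2) has_real_derivative
        - ((1/2) * exp (- (y^2 * tan s)) * y^2 * (1 / (cos s)^2))) (at s)"
      using cos by (auto intro!: derivative_eq_intros simp: field_simps)
    ultimately show ?thesis
      using DERIV_add by (fastforce simp only: diff_conv_add_uminus)
  qed
  consider "y = 0" | "0 < y" | "y < 0" by linarith
  then have lim: "(?G \<longlongrightarrow> (if 0 \<le> y then 1 else 0)) (at_left (pi/2))"
  proof cases
    case 2
    then have "(?G \<longlongrightarrow> inverse (1 + 0) + 0 / 2) (at_left (pi/2))"
      by (intro tendsto_intros tendsto_exp_uminus_at_top filterlim_mult_tan_at_left) simp_all
    with 2 show ?thesis by simp
  next
    case 3
    have "filterlim (\<lambda>s. exp ((- y) * tan s)) at_top (at_left (pi/2))"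
      using 3 by (intro filterlim_compose[OF exp_at_top] filterlim_mult_tan_at_left) simp
    then have "filterlim (\<lambda>s. 1 + exp (- (y * tan s))) at_top (at_left (pi/2))"
      by (intro filterlim_tendsto_add_at_top[OF tendsto_const]) simp
    with 3 have "(?G \<longlongrightarrow> 0 + 0 / 2) (at_left (pi/2))"
      by (intro tendsto_intros tendsto_exp_uminus_at_top filterlim_mult_tan_at_left
          tendsto_inverse_0_at_top) simp_all
    with 3 show ?thesis by simp
  qed simp
  show ?thesis
    using improper_integral_right_eq[OF _ deriv lim] unfolding H1_def by simp
qed

lemma sin_pi_div_eq_0_iff_dvd:
  fixes n d :: nat
  assumes "0 < d"
  shows "sin (pi * real n / real d) = 0 \<longleftrightarrow> d dvd n"
proof
  assume "sin (pi * real n / real d) = 0"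
  then obtain i :: int where "pi * real n / real d = of_int i * pi"
    by (auto simp: sin_zero_iff_int2)
  with assms have "real n = of_int (i * int d)"
    by (simp add: field_simps)
  then have "int n = i * int d"
    by (metis of_int_eq_iff of_int_of_nat_eq)
  then show "d dvd n"
    by (metis dvd_triv_right int_dvd_int_iff)
next
  assume "d dvd n"
  then obtain m where "n = d * m" by auto
  with assms have "pi * real n / real d = of_int (int m) * pi"
    by (simp add: field_simps)
  then show "sin (pi * real n / real d) = 0"
    by (auto simp: sin_zero_iff_int2)
qed

lemma sums_indicator_Suc:
  assumes "finite {n. P n}" "\<not> P 0"
  shows "(\<lambda>k. if P (Suc k) then 1 else 0) sums real (card {n. P n})"
proof -
  have "finite {k. P (Suc k)}"
    using finite_vimageI[OF assms(1), of Suc] by (simp add: vimage_def)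
  from sums_If_finite[OF this, of "\<lambda>_. 1 :: real"]
  have "(\<lambda>k. if P (Suc k) then 1 else 0) sums real (card {k. P (Suc k)})" by simp
  moreover have "{n. P n} = Suc ` {k. P (Suc k)}"
    using assms(2) by (auto simp: image_iff) (metis not0_implies_Suc)
  ultimately show ?thesis by (simp add: card_image)
qed

lemma card_divisors_eq_2_iff_prime:
  fixes n :: nat
  assumes "0 < n"
  shows "card {d. d dvd n} = 2 \<longleftrightarrow> prime n"
proof
  assume "prime n"
  then have "{d. d dvd n} = {1, n}" and "n \<noteq> 1"
    by (auto simp: prime_nat_iff)
  then show "card {d. d dvd n} = 2" by simp
next
  assume card: "card {d. d dvd n} = 2"
  then have "n \<noteq> 1" by auto
  then have "card {1, n} = 2" by simp
  with card have "{1, n} = {d. d dvd n}"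
    by (intro card_subset_eq) (use assms in auto)
  with \<open>n \<noteq> 1\<close> assms show "prime n"
    unfolding prime_nat_iff by auto
qed

lemma rt_sin_sums_card_divisors:
  assumes "0 < n"
  shows "(\<lambda>k. rt (sin (pi * real n / real (Suc k)))) sums real (card {d. d dvd n})"
proof -
  have "rt (sin (pi * real n / real (Suc k))) = (if Suc k dvd n then 1 else 0)" for k
    unfolding rt_eq sin_pi_div_eq_0_iff_dvd[OF zero_less_Suc] ..
  with sums_indicator_Suc[of "\<lambda>d. d dvd n"] assms show ?thesis
    by simp
qed

lemma sigma0_eq_card_divisors: "0 < n \<Longrightarrow> sigma0 n = real (card {d. d dvd n})"
  unfolding sigma0_def by (rule sums_unique[symmetric, OF rt_sin_sums_card_divisors])

lemma fes_eq: "0 < n \<Longrightarrow> fes n = (if prime n then 1 else 0)"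
  unfolding fes_def rt_eq by (simp add: sigma0_eq_card_divisors card_divisors_eq_2_iff_prime)

lemma finite_primes_le: "finite {p::nat. prime p \<and> real p \<le> x}"
proof (rule finite_subset)
  show "{p::nat. prime p \<and> real p \<le> x} \<subseteq> {..nat \<lceil>x\<rceil>}"
  proof clarify
    fix p :: nat assume "real p \<le> x"
    then have "real p \<le> of_int \<lceil>x\<rceil>"
      using le_of_int_ceiling order.trans by blast
    then show "p \<le> nat \<lceil>x\<rceil>" by linarith
  qed
qed simp

theorem mainTheorem8:
  shows "(\<forall>n::nat. n > 0 \<longrightarrow>
            ((\<lambda>k. rt (sin (pi * real n / real (Suc k)))) sums real (card {d. d dvd n})) \<and>
            sigma0 n = real (card {d. d dvd n}) \<and>
            fes n = (if prime n then 1 else 0))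
       \<and> (\<forall>x::real. (\<lambda>k. fes (Suc k) * H1 (x - real (Suc k)))
                     sums real (card {p::nat. prime p \<and> real p \<le> x}))"
proof (intro conjI allI impI)
  fix x :: real
  have "fes (Suc k) * H1 (x - real (Suc k)) = (if prime (Suc k) \<and> real (Suc k) \<le> x then 1 else 0)"
    for k
    by (simp only: fes_eq[OF zero_less_Suc] H1_eq) simp
  with sums_indicator_Suc[OF finite_primes_le, of x]
  show "(\<lambda>k. fes (Suc k) * H1 (x - real (Suc k))) sums real (card {p::nat. prime p \<and> real p \<le> x})"
    by simp
qed (blast intro: rt_sin_sums_card_divisors sigma0_eq_card_divisors fes_eq)+

end
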